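(* Let $q \geq 4$ be a power of $2$, and let $\mathcal{C} \subseteq (\mathbb{F}_{q^2})^{q^3}$ be the Hermitian-Lifted Code (defined in the context). Then the rate of $\mathcal{C}$, i.e. $\dim_{\mathbb{F}_{q^2}}(\mathcal{C})/q^3$, is at least $0.007$.
   Context: Let $q$ be a prime power. The Hermitian curve $\mathcal{H}_q$ is given by the affine equation $x^q + x = y^{q+1}$. Let $\mathcal{X} = \{(x,y) \in (\mathbb{F}_{q^2})^2 : x^q + x = y^{q+1}\}$ be its set of affine $\mathbb{F}_{q^2}$-rational points; $|\mathcal{X}| = q^3$. For $\alpha,\beta \in \mathbb{F}_{q^2}$, let $L_{\alpha,\beta}:\mathbb{F}_{q^2} \to (\mathbb{F}_{q^2})^2$, $L_{\alpha,\beta}(t) = (\alpha t + \beta, t)$, and let $\mathcal{L} = \{L_{\alpha,\beta} : \alpha,\beta \in \mathbb{F}_{q^2}\}$. For $f \in \mathbb{F}_{q^2}[x,y]$, $g \in \mathbb{F}_{q^2}[t]$ and $L \in \mathcal{L}$, say that $f\circ L$ agrees with $g$ on $\mathcal{X}$ if $f(L(t)) = g(t)$ for all $t \in \mathbb{F}_{q^2}$ with $L(t) \in \mathcal{X}$. Let $\mathcal{F}$ be the set of $f \in \mathbb{F}_{q^2}[x,y]$ such that for every $L \in \mathcal{L}$ there exists $g \in \mathbb{F}_{q^2}[t]$ with $\deg g \leq q-1$ such that $f \circ L$ agrees with $g$ on $\mathcal{X}$. The Hermitian-Lifted Code is $\mathcal{C} = \{ (f(P))_{P \in \mathcal{X}}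 : f \in \mathcal{F}\}$, a linear code of length $q^3$ over $\mathbb{F}_{q^2}$. *)

theory Defs
  imports "HOL-Computational_Algebra.Polynomial" "HOL-Library.Function_Algebras"
begin

text \<open>Bivariate polynomials over a field, represented by their coefficient function
  (finitely supported): the coefficient of the monomial x^i y^j is c (i,j).\<close>

definition bipoly_coeffs :: "(nat \<times> nat \<Rightarrow> 'a::field) set" where
  "bipoly_coeffs = {c. finite {m. c m \<noteq> 0}}"

definition bipoly_eval :: "(nat \<times> nat \<Rightarrow> 'a::field) \<Rightarrow> 'a \<Rightarrow> 'a \<Rightarrow> 'a" where
  "bipoly_eval c x y = (\<Sum>m\<in>{m. c m \<noteq> 0}. c m * x ^ fst m * y ^ snd m)"

text \<open>Affine rational points of the Hermitian curve x^q + x = y^(q+1) over the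
  field 'a (intended to be of order q^2).\<close>

definition herm_points :: "nat \<Rightarrow> ('a::field \<times> 'a) set" where
  "herm_points q = {(x, y). x ^ q + x = y ^ (q + 1)}"

definition herm_lifted_polys :: "nat \<Rightarrow> (nat \<times> nat \<Rightarrow> 'a::field) set" where
  "herm_lifted_polys q = {c \<in> bipoly_coeffs. \<forall>\<alpha> \<beta>. \<exists>g :: 'a poly. degree g \<le> q - 1 \<and>
      (\<forall>t. (\<alpha> * t + \<beta>, t) \<in> herm_points q \<longrightarrow> bipoly_eval c (\<alpha> * t + \<beta>) t = poly g t)}"

text \<open>The Hermitian-lifted code: codewords (f(P))_{P in X} are represented as functions on
  'a \<times> 'a that vanish outside X = herm_points q.\<close>

definition herm_lifted_code :: "nat \<Rightarrow> ('a::field \<times> 'a \<Rightarrow> 'a) set" where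
  "herm_lifted_code q = (\<lambda>c. \<lambda>P. if P \<in> herm_points q then bipoly_eval c (fst P) (snd P) else 0)
      ` herm_lifted_polys q"

definition fun_dim :: "('b \<Rightarrow> 'a::field) set \<Rightarrow> nat" where
  "fun_dim V = vector_space.dim (\<lambda>a f. \<lambda>x. a * f x) V"

end

theory Submission
  imports Defs "HOL-Library.Cardinality"
begin

(* Let k = q/4. The 2k^3 = q^3/32 monomials x^(2i) y^(2j0 + 2q j1) with 4i < q, 4j0 < q and
   2j1 < q are lifted. On the line x = \<alpha>t + \<beta>, the curve equation says that u = t - \<alpha>^q
   satisfies u^(q+1) = c with c = \<alpha>^(q+1) + \<beta>^q + \<beta> constant, and t^q u = c + \<alpha>u; hence
   the monomial times u^(2j1) is R(u)^2 for a polynomial R of degree at most i + j0 + j1.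
   In characteristic 2, R(u)^2 contains only even powers of u, and on the curve
   u^(-2d) = u^(q+1-2d) / c, so the monomial agrees there with a polynomial of degree at most
   q - 1. (If c = 0 the line meets the curve only at t = \<alpha>^q.)
   The evaluations of these monomials on the curve are linearly independent: their exponents lie
   in [0,q) x [0,q^2), and every fibre {x. (x, y) on the curve} has exactly q points, because the
   trace x^q + x maps the field of q^2 elements onto the subfield of q elements with a kernel of
   size q. Hence the dimension is at least q^3/32 > 0.007 q^3. *)

(* The library's finite_field_power_card_eq_same is stated for the type class finite_field,
   not for {finite,field}. *)
lemma power_card_UNIV_eq_self:
  fixes x :: "'a::{finite,field}"
  shows "x ^ CARD('a) = x"
proof (cases "x = 0")
  case False
  let ?N = "UNIV - {0::'a}"
  have "(\<Prod>y\<in>?N. x * y) = (\<Prod>y\<in>?N. y)"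
    by (rule prod.reindex_bij_witness[of _ "\<lambda>y. y / x" "\<lambda>y. x * y"]) (use False in auto)
  then have "x ^ card ?N = 1"
    by (simp add: prod.distrib)
  moreover have "CARD('a) = Suc (card ?N)"
    by (simp add: card_Diff_singleton finite_UNIV_card_ge_0)
  ultimately show ?thesis
    by (metis power_Suc2 mult_1)
qed (simp add: finite_UNIV_card_ge_0)

lemma card_UNIV_field_ge_2: "2 \<le> CARD('a::{finite,field})"
proof -
  have "card {0, 1::'a} \<le> CARD('a)"
    by (rule card_mono) auto
  then show ?thesis
    by simp
qed

lemma ge_2_if_card_eq_square:
  assumes "CARD('a::{finite,field}) = q ^ 2"
  shows "2 \<le> q"
proof -
  have "2 \<le> q ^ 2"
    using card_UNIV_field_ge_2[where 'a = 'a] assms by simp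
  then show ?thesis
    by (cases "q \<le> 1") (auto simp: le_Suc_eq power2_eq_square)
qed

lemma power_power_eq_self_if_card_eq_square:
  fixes x :: "'a::{finite,field}"
  assumes "CARD('a) = q ^ 2"
  shows "(x ^ q) ^ q = x"
  using power_card_UNIV_eq_self[of x] assms by (simp add: power2_eq_square power_mult)

lemma CHAR_eq_2_if_card_power_of_2:
  assumes "CARD('a::{finite,field}) = 2 ^ n"
  shows "CHAR('a) = 2"
proof -
  have "n \<noteq> 0"
    using card_UNIV_field_ge_2[where 'a = 'a] assms by (cases n) auto
  then have "(-1::'a) = 1"
    using power_card_UNIV_eq_self[of "-1::'a"] assms by simp
  then have "of_nat 2 = (0::'a)"
    by (metis add_eq_0_iff of_nat_numeral one_add_one)
  then have "CHAR('a) dvd 2"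
    by (simp only: of_nat_eq_0_iff_char_dvd)
  then show ?thesis
    using two_is_prime_nat CHAR_not_1[where 'a = 'a] unfolding prime_nat_iff by auto
qed

lemma card_roots_power_plus_linear_le:
  fixes w :: "'a::field"
  assumes "2 \<le> q"
  shows "card {x. x ^ q + w * x = 0} \<le> q"
proof -
  define p where "p = monom 1 q + [:0, w:]"
  have "degree p = q"
    using assms by (simp add: p_def degree_add_eq_left degree_monom_eq)
  moreover have "{x. x ^ q + w * x = 0} = {x. poly p x = 0}"
    by (simp add: p_def poly_monom mult.commute)
  ultimately show ?thesis
    using card_poly_roots_bound[of p] assms by fastforce
qed

lemma card_fibre_additive_eq_card_kernel:
  fixes T :: "'a::ab_group_add \<Rightarrow> 'b::ab_group_add"
  assumes "\<And>x y. T (x + y) = T x + T y"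
  shows "card {x. T x = T x0} = card {x. T x = 0}"
proof -
  have T_diff: "T (x - y) = T x - T y" for x y
    using assms[of "x - y" y] by (simp add: algebra_simps)
  have "{x. T x = T x0} = (\<lambda>k. x0 + k) ` {x. T x = 0}"
    by (auto simp: T_diff intro!: image_eqI[of _ _ "_ - x0"]
        simp flip: T_diff[of _ x0] simp: assms)
  then show ?thesis
    by (simp add: card_image)
qed

lemma card_UNIV_eq_card_range_times_card_kernel:
  fixes T :: "'a::{finite,ab_group_add} \<Rightarrow> 'b::ab_group_add"
  assumes "\<And>x y. T (x + y) = T x + T y"
  shows "CARD('a) = card (range T) * card {x. T x = 0}"
proof -
  have "CARD('a) = card (\<Union>w\<in>range T. {x. T x = w})"
    by (rule arg_cong[where f = card]) auto
  also have "\<dots> = (\<Sum>w\<in>range T. card {x. T x = w})"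
    by (rule card_UN_disjoint) auto
  also have "\<dots> = (\<Sum>w\<in>range T. card {x. T x = 0})"
    using card_fibre_additive_eq_card_kernel[OF assms] by (intro sum.cong) auto
  also have "\<dots> = card (range T) * card {x. T x = 0}"
    by simp
  finally show ?thesis .
qed

lemma card_trace_fibre:
  fixes w :: "'a::{finite,field}"
  assumes card: "CARD('a) = q ^ 2"
    and frobenius: "\<And>x y::'a. (x + y) ^ q = x ^ q + y ^ q"
    and w: "w ^ q = w"
  shows "card {x. x ^ q + x = w} = q"
proof -
  define T where "T x = x ^ q + x" for x :: 'a
  define K where "K = {x. T x = 0}"
  define F where "F = {z::'a. z ^ q = z}"
  have q: "2 \<le> q"
    using card by (rule ge_2_if_card_eq_square)
  have T_add: "T (x + y) = T x + T y" for x y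
    by (simp add: T_def frobenius algebra_simps)
  have card_K: "card K \<le> q"
    using card_roots_power_plus_linear_le[OF q, of 1] by (simp add: K_def T_def)
  have card_F: "card F \<le> q"
    using card_roots_power_plus_linear_le[OF q, of "-1"] by (simp add: F_def)
  have range_T: "range T \<subseteq> F"
    by (auto simp: F_def T_def frobenius power_power_eq_self_if_card_eq_square[OF card])
  have card_range: "card (range T) \<le> q"
    using card_mono[OF _ range_T] card_F by (meson finite le_trans)
  have "q * q = card (range T) * card K"
    using card_UNIV_eq_card_range_times_card_kernel[OF T_add] card
    by (simp add: K_def power2_eq_square)
  moreover have "card (range T) * card K \<le> card (range T) * q"
    using card_K by simp
  moreover have "card (range T) * q \<le> q * q"
    using card_range by simp
  ultimately have "card (range T) * q = q * q" and "card (range T) * card K = card (range T) * q"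
    by linarith+
  then have "card (range T) = q" and "card K = q"
    using q by simp_all
  then have "range T = F"
    using range_T card_F by (metis card_seteq finite)
  then obtain x0 where "w = T x0"
    using w by (auto simp: F_def)
  then show ?thesis
    using card_fibre_additive_eq_card_kernel[OF T_add, of x0] \<open>card K = q\<close>
    by (simp add: T_def K_def)
qed

lemma card_herm_points_fibre:
  fixes y :: "'a::{finite,field}"
  assumes card: "CARD('a) = q ^ 2"
    and frobenius: "\<And>x y::'a. (x + y) ^ q = x ^ q + y ^ q"
  shows "card {x. (x, y) \<in> herm_points q} = q"
proof -
  have "(y ^ (q + 1)) ^ q = (y ^ q) ^ q * y ^ q"
    by (simp add: power_add power_mult_distrib)
  then have "(y ^ (q + 1)) ^ q = y ^ (q + 1)"
    by (simp add: power_power_eq_self_if_card_eq_square[OF card] mult.commute)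
  then show ?thesis
    using card_trace_fibre[OF card frobenius] by (simp add: herm_points_def)
qed

lemma sum_coeffs_eq_0_if_vanishes:
  fixes c :: "'i \<Rightarrow> 'a::field"
  assumes I: "finite I" and deg: "\<And>k. k \<in> I \<Longrightarrow> d k < card A"
    and vanish: "\<And>x. x \<in> A \<Longrightarrow> (\<Sum>k\<in>I. c k * x ^ d k) = 0"
  shows "(\<Sum>k | k \<in> I \<and> d k = n. c k) = 0"
proof (cases "I = {}")
  case False
  define p where "p = (\<Sum>k\<in>I. monom (c k) (d k))"
  have "degree p \<le> card A - 1"
    unfolding p_def
  proof (rule degree_sum_le[OF I])
    show "degree (monom (c k) (d k)) \<le> card A - 1" if "k \<in> I" for k
      using deg[OF that] degree_monom_le[of "c k" "d k"] by linarith
  qed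
  moreover have "card A > 0"
    using False deg by fastforce
  ultimately have "p = 0"
    using vanish by (intro poly_eqI_degree[of A]) (auto simp: p_def poly_sum poly_monom)
  moreover have "coeff p n = (\<Sum>k\<in>I. if d k = n then c k else 0)"
    by (simp add: p_def coeff_sum coeff_monom)
  ultimately show ?thesis
    using I by (simp add: sum.inter_filter)
qed simp

lemma bivariate_coeff_eq_0_if_vanishes:
  fixes c :: "nat \<times> nat \<Rightarrow> 'a::{finite,field}"
  assumes E: "E \<subseteq> {..<q} \<times> {..<CARD('a)}"
    and fibres: "\<And>y. q \<le> card {x. (x, y) \<in> S}"
    and vanish: "\<And>x y. (x, y) \<in> S \<Longrightarrow> (\<Sum>(a, b)\<in>E. c (a, b) * x ^ a * y ^ b) = 0"
    and ab: "(a, b) \<in> E"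
  shows "c (a, b) = 0"
proof -
  have fin: "finite E"
    using E by (rule finite_subset) auto
  have row: "(\<Sum>k | k \<in> E \<and> fst k = a. c k * y ^ snd k) = 0" for y
  proof (rule sum_coeffs_eq_0_if_vanishes[OF fin])
    show "fst k < card {x. (x, y) \<in> S}" if "k \<in> E" for k
      using that E fibres[of y] by fastforce
    show "(\<Sum>k\<in>E. c k * y ^ snd k * x ^ fst k) = 0" if "x \<in> {x. (x, y) \<in> S}" for x
      using vanish[of x y] that by (simp add: case_prod_unfold mult_ac)
  qed
  have "(\<Sum>k | k \<in> {k \<in> E. fst k = a} \<and> snd k = b. c k) = 0"
  proof (rule sum_coeffs_eq_0_if_vanishes[where A = UNIV])
    show "finite {k \<in> E. fst k = a}"
      using fin by simp
    show "snd k < CARD('a)" if "k \<in> {k \<in> E. fst k = a}" for k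
      using that E by auto
    show "(\<Sum>k\<in>{k \<in> E. fst k = a}. c k * y ^ snd k) = 0" for y
      using row[of y] by simp
  qed
  moreover have "{k. k \<in> {k \<in> E. fst k = a} \<and> snd k = b} = {(a, b)}"
    using ab by auto
  ultimately show ?thesis
    by simp
qed

lemma inj_on_if_only_trivial_vanishing_combination:
  fixes \<phi> :: "'i \<Rightarrow> 'b \<Rightarrow> 'a::field"
  assumes I: "finite I"
    and indep: "\<And>c i. (\<And>x. (\<Sum>j\<in>I. c j * \<phi> j x) = 0) \<Longrightarrow> i \<in> I \<Longrightarrow> c i = 0"
  shows "inj_on \<phi> I"
proof (rule inj_onI, rule ccontr)
  fix i j assume i: "i \<in> I" and j: "j \<in> I" and eq: "\<phi> i = \<phi> j" and "i \<noteq> j"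
  define c where "c k = (if k = i then 1 else if k = j then -1 else 0 :: 'a)" for k
  have "(\<Sum>k\<in>I. c k * \<phi> k x)
      = (\<Sum>k\<in>I. (if k = i then \<phi> k x else 0) - (if k = j then \<phi> k x else 0))" for x
    using \<open>i \<noteq> j\<close> by (intro sum.cong) (auto simp: c_def)
  then have "(\<Sum>k\<in>I. c k * \<phi> k x) = 0" for x
    using i j I eq by (simp add: sum_subtractf)
  then have "c i = 0"
    using indep[of c i] i by simp
  then show False
    by (simp add: c_def)
qed

lemma fun_vector_space: "vector_space (\<lambda>a (f :: 'b \<Rightarrow> 'a::field). \<lambda>x. a * f x)"
  by unfold_locales (simp_all add: fun_eq_iff algebra_simps)

lemma card_le_fun_dim:
  fixes \<phi> :: "'i \<Rightarrow> 'b::finite \<Rightarrow> 'a::{finite,field}"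
  assumes I: "finite I" and V: "\<phi> ` I \<subseteq> V"
    and indep: "\<And>c i. (\<And>x. (\<Sum>j\<in>I. c j * \<phi> j x) = 0) \<Longrightarrow> i \<in> I \<Longrightarrow> c i = 0"
  shows "card I \<le> fun_dim V"
proof -
  interpret vector_space "\<lambda>a (f :: 'b \<Rightarrow> 'a). \<lambda>x. a * f x"
    by (rule fun_vector_space)
  have inj: "inj_on \<phi> I"
    using I indep by (rule inj_on_if_only_trivial_vanishing_combination)
  have "independent (\<phi> ` I)"
  proof (rule independent_if_scalars_zero)
    show "finite (\<phi> ` I)"
      using I by simp
    fix f v assume sum0: "(\<Sum>w\<in>\<phi> ` I. (\<lambda>x. f w * w x)) = 0" and v: "v \<in> \<phi> ` I"
    have "(\<Sum>j\<in>I. f (\<phi> j) * \<phi> j x) = 0" for x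
    proof -
      have "(\<Sum>j\<in>I. (\<lambda>x. f (\<phi> j) * \<phi> j x)) x = (\<Sum>j\<in>I. f (\<phi> j) * \<phi> j x)"
        using I by (induction I rule: finite_induct) auto
      then show ?thesis
        using fun_cong[OF sum0, of x] by (simp add: sum.reindex[OF inj])
    qed
    then show "f v = 0"
      using indep[of "f \<circ> \<phi>"] v by auto
  qed
  then obtain B where B: "\<phi> ` I \<subseteq> B" "B \<subseteq> V" "independent B" "V \<subseteq> span B"
    using maximal_independent_subset_extend[OF V] by blast
  have "card (\<phi> ` I) \<le> card B"
    using B(1) by (rule card_mono[OF finite])
  also have "\<dots> = fun_dim V"
    unfolding fun_dim_def by (rule basis_card_eq_dim[OF B(2) B(4) B(3)])
  finally show ?thesis
    using inj by (simp add: card_image)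
qed

lemma hermitian_curve_on_line:
  fixes \<alpha> \<beta> t :: "'a::{finite,field}"
  assumes card: "CARD('a) = q ^ 2" and frobenius: "\<And>x y::'a. (x + y) ^ q = x ^ q + y ^ q"
    and on_curve: "(\<alpha> * t + \<beta>, t) \<in> herm_points q"
  shows "(t - \<alpha> ^ q) ^ (q + 1) = \<alpha> ^ (q + 1) + \<beta> ^ q + \<beta>"
proof -
  have \<alpha>: "(\<alpha> ^ q) ^ q = \<alpha>"
    using card by (rule power_power_eq_self_if_card_eq_square)
  have curve: "t ^ q * t = \<alpha> ^ q * t ^ q + \<beta> ^ q + \<alpha> * t + \<beta>"
    using on_curve by (simp add: herm_points_def frobenius power_mult_distrib mult.commute add.assoc)
  have "(t - \<alpha> ^ q) ^ q = t ^ q - \<alpha>"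
    using frobenius[of "t - \<alpha> ^ q" "\<alpha> ^ q"] \<alpha> by (simp add: eq_diff_eq)
  then have "(t - \<alpha> ^ q) ^ (q + 1) = (t ^ q - \<alpha>) * (t - \<alpha> ^ q)"
    by simp
  also have "\<dots> = t ^ q * t - \<alpha> ^ q * t ^ q - \<alpha> * t + \<alpha> * \<alpha> ^ q"
    by (simp only: algebra_simps)
  also have "\<dots> = \<alpha> ^ (q + 1) + \<beta> ^ q + \<beta>"
    unfolding curve by (simp add: algebra_simps)
  finally show ?thesis .
qed

lemma poly_square_div_power_agrees_with_poly:
  fixes R :: "'a::field poly"
  assumes char: "CHAR('a) = 2" and c: "c \<noteq> 0"
    and deg: "2 * degree R < q + 2 * j" and j: "2 * j \<le> q"
  shows "\<exists>g. degree g \<le> q - 1 \<and> (\<forall>u. u ^ (q + 1) = c \<longrightarrow> poly R u ^ 2 / u ^ (2 * j) = poly g u)"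
proof -
  \<comment> \<open>On the curve, \<open>h e\<close> agrees with \<open>u ^ (2 * e - 2 * j)\<close>; negative exponents are shifted by \<open>q + 1\<close>.\<close>
  define h where "h e = (if j \<le> e then monom 1 (2 * (e - j))
      else monom (inverse c) (q + 1 - 2 * (j - e)))" for e
  define g where "g = (\<Sum>e\<le>degree R. smult (coeff R e ^ 2) (h e))"
  have "degree (h e) \<le> q - 1" if "e \<le> degree R" for e
    using that deg j by (auto simp: h_def intro!: order.trans[OF degree_monom_le])
  then have "degree g \<le> q - 1"
    unfolding g_def by (intro degree_sum_le) (auto intro: order.trans[OF degree_smult_le])
  moreover have "poly R u ^ 2 / u ^ (2 * j) = poly g u" if u: "u ^ (q + 1) = c" for u
  proof -
    have "u \<noteq> 0"
      using u c by auto
    have h: "poly (h e) u = u ^ (2 * e) / u ^ (2 * j)" for e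
    proof (cases "j \<le> e")
      case True
      then have "2 * e = 2 * (e - j) + 2 * j"
        by simp
      then have "u ^ (2 * e) = u ^ (2 * (e - j)) * u ^ (2 * j)"
        by (metis power_add)
      then show ?thesis
        using True \<open>u \<noteq> 0\<close> by (simp add: h_def poly_monom)
    next
      case False
      then have "q + 1 - 2 * (j - e) + 2 * j = (q + 1) + 2 * e"
        using j by simp
      then have "u ^ (q + 1 - 2 * (j - e)) * u ^ (2 * j) = u ^ (q + 1) * u ^ (2 * e)"
        by (metis power_add)
      then show ?thesis
        using False \<open>u \<noteq> 0\<close> u c by (simp add: h_def poly_monom field_simps)
    qed
    have "poly R u ^ 2 = (\<Sum>e\<le>degree R. coeff R e ^ 2 * u ^ (2 * e))"
      unfolding poly_altdef using char
      by (subst freshmans_dream_sum'[where n = 1]) (simp_all add: power_mult_distrib power_mult mult.commute)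
    then show ?thesis
      by (simp add: g_def poly_sum h sum_divide_distrib)
  qed
  ultimately show ?thesis
    by blast
qed

definition bipoly_monom :: "nat \<Rightarrow> nat \<Rightarrow> nat \<times> nat \<Rightarrow> 'a::field" where
  "bipoly_monom a b = (\<lambda>m. if m = (a, b) then 1 else 0)"

lemma bipoly_monom_in_bipoly_coeffs: "bipoly_monom a b \<in> bipoly_coeffs"
  by (simp add: bipoly_coeffs_def bipoly_monom_def)

lemma bipoly_eval_bipoly_monom: "bipoly_eval (bipoly_monom a b) x y = x ^ a * y ^ b"
proof -
  have "{m. bipoly_monom a b m \<noteq> (0::'a)} = {(a, b)}"
    by (auto simp: bipoly_monom_def)
  then show ?thesis
    by (simp add: bipoly_eval_def bipoly_monom_def)
qed

lemma hermitian_monomial_times_power_eq_square: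
  fixes \<alpha> \<beta> t u c :: "'a::{finite,field}"
  assumes card: "CARD('a) = q ^ 2" and frobenius: "\<And>x y::'a. (x + y) ^ q = x ^ q + y ^ q"
    and u: "u = t - \<alpha> ^ q" and curve: "u ^ (q + 1) = c"
  shows "(\<alpha> * t + \<beta>) ^ (2 * i) * t ^ (2 * j0 + q * (2 * j1)) * u ^ (2 * j1)
    = poly ([:\<alpha> * \<alpha> ^ q + \<beta>, \<alpha>:] ^ i * [:\<alpha> ^ q, 1:] ^ j0 * [:c, \<alpha>:] ^ j1) u ^ 2"
proof -
  have t: "t = \<alpha> ^ q + u"
    using u by simp
  then have "t ^ q = \<alpha> + u ^ q"
    by (simp add: frobenius power_power_eq_self_if_card_eq_square[OF card])
  then have tq_u: "t ^ q * u = c + \<alpha> * u"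
    using curve by (simp add: algebra_simps)
  have "(\<alpha> * t + \<beta>) ^ (2 * i) * t ^ (2 * j0 + q * (2 * j1)) * u ^ (2 * j1)
      = (\<alpha> * t + \<beta>) ^ (2 * i) * t ^ (2 * j0) * (t ^ q * u) ^ (2 * j1)"
    by (simp add: power_add power_mult power_mult_distrib)
  also have "\<dots> = ((\<alpha> * \<alpha> ^ q + \<beta> + \<alpha> * u) ^ i * (\<alpha> ^ q + u) ^ j0 * (c + \<alpha> * u) ^ j1) ^ 2"
    unfolding tq_u by (simp add: t algebra_simps power_mult_distrib flip: power_mult)
  finally show ?thesis
    by (simp add: poly_power mult.commute)
qed

lemma hermitian_monomial_on_line_agrees_with_poly:
  fixes \<alpha> \<beta> :: "'a::{finite,field}"
  assumes card: "CARD('a) = q ^ 2" and char: "CHAR('a) = 2"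
    and frobenius: "\<And>x y::'a. (x + y) ^ q = x ^ q + y ^ q"
    and i: "4 * i < q" and j0: "4 * j0 < q" and j1: "2 * j1 < q"
  shows "\<exists>g :: 'a poly. degree g \<le> q - 1 \<and> (\<forall>t. (\<alpha> * t + \<beta>, t) \<in> herm_points q \<longrightarrow>
    (\<alpha> * t + \<beta>) ^ (2 * i) * t ^ (2 * j0 + q * (2 * j1)) = poly g t)"
proof -
  define c where "c = \<alpha> ^ (q + 1) + \<beta> ^ q + \<beta>"
  have on_line: "(t - \<alpha> ^ q) ^ (q + 1) = c" if "(\<alpha> * t + \<beta>, t) \<in> herm_points q" for t
    using hermitian_curve_on_line[OF card frobenius that] by (simp add: c_def)
  show ?thesis
  proof (cases "c = 0")
    case True
    then have "t = \<alpha> ^ q" if "(\<alpha> * t + \<beta>, t) \<in> herm_points q" for t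
      using on_line[OF that] by auto
    then show ?thesis
      by (intro exI[of _ "[:(\<alpha> * \<alpha> ^ q + \<beta>) ^ (2 * i) * (\<alpha> ^ q) ^ (2 * j0 + q * (2 * j1)):]"]) auto
  next
    case False
    define R where "R = [:\<alpha> * \<alpha> ^ q + \<beta>, \<alpha>:] ^ i * [:\<alpha> ^ q, 1:] ^ j0 * [:c, \<alpha>:] ^ j1"
    have linear_power: "degree ([:x, y:] ^ n) \<le> n" for x y :: 'a and n
      by (rule order.trans[OF degree_power_le]) (simp add: degree_pCons_eq_if)
    have "degree R \<le> i + j0 + j1"
      unfolding R_def using linear_power
      by (intro order.trans[OF degree_mult_le] add_mono order.trans[OF degree_mult_le]) auto
    then obtain g where g: "degree g \<le> q - 1"
      and g_eq: "\<And>u. u ^ (q + 1) = c \<Longrightarrow> poly R u ^ 2 / u ^ (2 * j1) = poly g u"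
      using poly_square_div_power_agrees_with_poly[OF char False, of R q j1] i j0 j1 by auto
    show ?thesis
    proof (intro exI[of _ "g \<circ>\<^sub>p [:-(\<alpha> ^ q), 1:]"] conjI allI impI)
      show "degree (g \<circ>\<^sub>p [:-(\<alpha> ^ q), 1:]) \<le> q - 1"
        using g by (simp add: degree_pcompose)
      fix t assume "(\<alpha> * t + \<beta>, t) \<in> herm_points q"
      then have curve: "(t - \<alpha> ^ q) ^ (q + 1) = c"
        by (rule on_line)
      then have "t - \<alpha> ^ q \<noteq> 0"
        using False by auto
      then show "(\<alpha> * t + \<beta>) ^ (2 * i) * t ^ (2 * j0 + q * (2 * j1)) = poly (g \<circ>\<^sub>p [:-(\<alpha> ^ q), 1:]) t"
        using hermitian_monomial_times_power_eq_square[OF card frobenius refl curve, of \<beta> i j0 j1]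
          g_eq[OF curve]
        by (simp add: R_def poly_pcompose field_simps)
    qed
  qed
qed

lemma bipoly_monom_in_herm_lifted_polys:
  assumes "CARD('a::{finite,field}) = q ^ 2" and "CHAR('a) = 2"
    and "\<And>x y::'a. (x + y) ^ q = x ^ q + y ^ q"
    and "4 * i < q" and "4 * j0 < q" and "2 * j1 < q"
  shows "(bipoly_monom (2 * i) (2 * j0 + q * (2 * j1)) :: nat \<times> nat \<Rightarrow> 'a) \<in> herm_lifted_polys q"
  using hermitian_monomial_on_line_agrees_with_poly[OF assms]
  by (simp add: herm_lifted_polys_def bipoly_monom_in_bipoly_coeffs bipoly_eval_bipoly_monom)

definition lifted_exponents :: "nat \<Rightarrow> (nat \<times> nat) set" where
  "lifted_exponents q =
    {(2 * i, 2 * j0 + q * (2 * j1)) | i j0 j1. 4 * i < q \<and> 4 * j0 < q \<and> 2 * j1 < q}"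

lemma lifted_exponents_subset: "lifted_exponents q \<subseteq> {..<q} \<times> {..<q ^ 2}"
proof
  fix e assume "e \<in> lifted_exponents q"
  then obtain i j0 j1 where e: "e = (2 * i, 2 * j0 + q * (2 * j1))"
    and bounds: "4 * i < q" "4 * j0 < q" "2 * j1 < q"
    by (auto simp: lifted_exponents_def)
  have "2 * j0 + q * (2 * j1) < q * (2 * j1 + 1)"
    using bounds by simp
  also have "\<dots> \<le> q * q"
    using bounds by (intro mult_le_mono2) simp
  finally show "e \<in> {..<q} \<times> {..<q ^ 2}"
    using e bounds by (simp add: power2_eq_square)
qed

lemma card_lifted_exponents:
  assumes "q = 4 * k"
  shows "card (lifted_exponents q) = 2 * k ^ 3"
proof -
  define e :: "nat \<times> nat \<times> nat \<Rightarrow> nat \<times> nat"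
    where "e = (\<lambda>(i, j0, j1). (2 * i, 2 * j0 + q * (2 * j1)))"
  define T where "T = {..<k} \<times> {..<k} \<times> {..<2 * k}"
  have "lifted_exponents q = e ` T"
    using assms by (force simp: lifted_exponents_def e_def T_def)
  moreover have "inj_on e T"
  proof (rule inj_onI)
    fix x x' assume "x \<in> T" "x' \<in> T" and eq: "e x = e x'"
    moreover obtain i j0 j1 i' j0' j1' where x: "x = (i, j0, j1)" and x': "x' = (i', j0', j1')"
      by (cases x, cases x') auto
    ultimately have "2 * j0 < q" "2 * j0' < q"
      using assms by (auto simp: T_def)
    then have "(2 * j0 + q * (2 * j1)) mod q = 2 * j0" "(2 * j0' + q * (2 * j1')) mod q = 2 * j0'"
      and "(2 * j0 + q * (2 * j1)) div q = 2 * j1" "(2 * j0' + q * (2 * j1')) div q = 2 * j1'"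
      by simp_all
    then show "x = x'"
      using eq by (auto simp: e_def x x')
  qed
  ultimately show ?thesis
    by (simp add: card_image T_def card_cartesian_product power3_eq_cube)
qed

lemma card_le_fun_dim_herm_lifted_code:
  fixes E :: "(nat \<times> nat) set"
  assumes card: "CARD('a::{finite,field}) = q ^ 2"
    and frobenius: "\<And>x y::'a. (x + y) ^ q = x ^ q + y ^ q"
    and E: "E \<subseteq> {..<q} \<times> {..<q ^ 2}"
    and lifted: "\<And>a b. (a, b) \<in> E \<Longrightarrow> (bipoly_monom a b :: nat \<times> nat \<Rightarrow> 'a) \<in> herm_lifted_polys q"
  shows "card E \<le> fun_dim (herm_lifted_code q :: ('a \<times> 'a \<Rightarrow> 'a) set)"
proof -
  define \<phi> where
    "\<phi> = (\<lambda>(a, b) (P :: 'a \<times> 'a). if P \<in> herm_points q then fst P ^ a * snd P ^ b else 0)"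
  show ?thesis
  proof (rule card_le_fun_dim)
    show "finite E"
      using E by (rule finite_subset) auto
    show "\<phi> ` E \<subseteq> herm_lifted_code q"
      unfolding herm_lifted_code_def using lifted
      by (auto simp: \<phi>_def bipoly_eval_bipoly_monom intro!: image_eqI)
    fix c and e :: "nat \<times> nat"
    assume vanish: "\<And>P. (\<Sum>k\<in>E. c k * \<phi> k P) = 0" and "e \<in> E"
    then obtain a b where ab: "e = (a, b)" "(a, b) \<in> E"
      by (cases e) auto
    show "c e = 0"
      unfolding ab(1)
    proof (rule bivariate_coeff_eq_0_if_vanishes[where S = "herm_points q :: ('a \<times> 'a) set"])
      show "E \<subseteq> {..<q} \<times> {..<CARD('a)}"
        using E card by simp
      show "q \<le> card {x. (x, y) \<in> herm_points q}" for y :: 'a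
        using card_herm_points_fibre[OF card frobenius] by simp
      show "(\<Sum>(a, b)\<in>E. c (a, b) * x ^ a * y ^ b) = 0" if "(x, y) \<in> herm_points q" for x y
        using vanish[of "(x, y)"] that by (simp add: \<phi>_def case_prod_unfold mult.assoc)
    qed (rule ab(2))
  qed
qed

theorem mainTheorem1:
  fixes q m :: nat
  assumes "q = 2 ^ m" and "q \<ge> 4"
    and "card (UNIV :: 'a::{finite,field} set) = q ^ 2"
  shows "real (fun_dim (herm_lifted_code q :: ('a \<times> 'a \<Rightarrow> 'a) set)) / real (q ^ 3) \<ge> 0.007"
proof -
  have "m \<ge> 2"
    using assms(1,2) power_increasing_iff[of "2::nat" 2 m] by simp
  define k :: nat where "k = 2 ^ (m - 2)"
  have "(2::nat) ^ m = 2 ^ 2 * 2 ^ (m - 2)"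
    using \<open>m \<ge> 2\<close> by (metis le_add_diff_inverse power_add)
  then have q: "q = 4 * k"
    using assms(1) by (simp add: k_def)
  have char: "CHAR('a) = 2"
    using assms(1,3) by (intro CHAR_eq_2_if_card_power_of_2) (simp flip: power_mult)
  then have frobenius: "(x + y) ^ q = x ^ q + y ^ q" for x y :: 'a
    by (intro freshmans_dream') (simp_all add: assms(1))
  have "2 * k ^ 3 \<le> fun_dim (herm_lifted_code q :: ('a \<times> 'a \<Rightarrow> 'a) set)"
    using card_le_fun_dim_herm_lifted_code[OF assms(3) frobenius lifted_exponents_subset]
      bipoly_monom_in_herm_lifted_polys[OF assms(3) char frobenius] card_lifted_exponents[OF q]
    by (force simp: lifted_exponents_def)
  then have dim: "2 * real k ^ 3 \<le> real (fun_dim (herm_lifted_code q :: ('a \<times> 'a \<Rightarrow> 'a) set))"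
    by (metis of_nat_le_iff of_nat_mult of_nat_numeral of_nat_power)
  have "(0.007::real) \<le> 2 * real k ^ 3 / real (q ^ 3)"
    by (simp add: q k_def)
  also have "\<dots> \<le> real (fun_dim (herm_lifted_code q :: ('a \<times> 'a \<Rightarrow> 'a) set)) / real (q ^ 3)"
    using dim by (simp add: divide_right_mono)
  finally show ?thesis .
qed

end
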